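(* Let $S=\mathbb{N}_\wedge$ and let $w$ be a weight on $S$. Then $T=\begin{pmatrix}\ell^{1}(S,w)&\ell^{1}(S,w)\\0&\ell^{1}(S,w)\end{pmatrix}$ is not approximately biprojective.
   Context: $\mathbb{N}_\wedge$ is $\mathbb{N}$ with operation $m\wedge n=\min\{m,n\}$. A weight is a function $w:S\to\mathbb{R}^+$ with $w(st)\le w(s)w(t)$; $\ell^1(S,w)=\{f:\sum_s|f(s)|w(s)<\infty\}$ with convolution $\delta_s*\delta_t=\delta_{st}$. For a Banach algebra $A$, $T=\begin{pmatrix}A&A\\0&A\end{pmatrix}$ is the algebra of upper triangular matrices with entries in $A$, matrix operations and norm $\|a\|+\|x\|+\|b\|$. A Banach algebra $B$ is approximately biprojective if there is a net $(\rho_\alpha)$ of continuous $B$-bimodule morphisms $B\to B\otimes_pB$ with $\pi_B\circ\rho_\alpha(b)\to b$ for all $b$, where $\pi_B(b\otimes c)=bc$. *)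

theory Defs
  imports "HOL-Analysis.Analysis"
begin

definition weight :: "(nat \<Rightarrow> real) \<Rightarrow> bool" where
  "weight w \<longleftrightarrow> (\<forall>n. w n > 0) \<and> (\<forall>m n. w (min m n) \<le> w m * w n)"

definition l1 :: "(nat \<Rightarrow> real) \<Rightarrow> (nat \<Rightarrow> complex) \<Rightarrow> bool" where
  "l1 w f \<longleftrightarrow> (\<lambda>n. norm (f n) * w n) summable_on UNIV"

definition l1norm :: "(nat \<Rightarrow> real) \<Rightarrow> (nat \<Rightarrow> complex) \<Rightarrow> real" where
  "l1norm w f = (\<Sum>\<^sub>\<infinity>n. norm (f n) * w n)"

definition conv :: "(nat \<Rightarrow> complex) \<Rightarrow> (nat \<Rightarrow> complex) \<Rightarrow> nat \<Rightarrow> complex" where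
  "conv f g n = (\<Sum>\<^sub>\<infinity>(s,t)\<in>{(s,t). min s t = n}. f s * g t)"

text \<open>An element (a x; 0 b) of T is encoded as a function on pos x nat,
  with a = u(P11,-), x = u(P12,-), b = u(P22,-).\<close>
datatype pos = P11 | P12 | P22

type_synonym tri = "pos \<times> nat \<Rightarrow> complex"

definition entry :: "tri \<Rightarrow> pos \<Rightarrow> nat \<Rightarrow> complex" where
  "entry u i n = u (i, n)"

definition inT :: "(nat \<Rightarrow> real) \<Rightarrow> tri \<Rightarrow> bool" where
  "inT w u \<longleftrightarrow> l1 w (entry u P11) \<and> l1 w (entry u P12) \<and> l1 w (entry u P22)"

definition normT :: "(nat \<Rightarrow> real) \<Rightarrow> tri \<Rightarrow> real" where
  "normT w u = l1norm w (entry u P11) + l1norm w (entry u P12) + l1norm w (entry u P22)"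

text \<open>Matrix product: (a x; 0 b)(a' x'; 0 b') = (aa' , ax' + xb'; 0, bb').\<close>
definition multT :: "tri \<Rightarrow> tri \<Rightarrow> tri" where
  "multT u v = (\<lambda>(i, n). case i of
      P11 \<Rightarrow> conv (entry u P11) (entry v P11) n
    | P12 \<Rightarrow> conv (entry u P11) (entry v P12) n + conv (entry u P12) (entry v P22) n
    | P22 \<Rightarrow> conv (entry u P22) (entry v P22) n)"

definition deltaT :: "pos \<times> nat \<Rightarrow> tri" where
  "deltaT p = (\<lambda>q. if q = p then 1 else 0)"

text \<open>As a Banach space T = l1(pos x nat, v) with v(i,n) = w n, so
  T (x)_p T = l1((pos x nat) x (pos x nat), v (x) v), with u (x) u' corresponding
  to (p,q) |-> u p * u' q.\<close>
type_synonym tens = "(pos \<times> nat) \<times> (pos \<times> nat) \<Rightarrow> complex"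

definition inTT :: "(nat \<Rightarrow> real) \<Rightarrow> tens \<Rightarrow> bool" where
  "inTT w F \<longleftrightarrow> (\<lambda>(p, q). norm (F (p, q)) * w (snd p) * w (snd q)) summable_on UNIV"

definition normTT :: "(nat \<Rightarrow> real) \<Rightarrow> tens \<Rightarrow> real" where
  "normTT w F = (\<Sum>\<^sub>\<infinity>(p, q). norm (F (p, q)) * w (snd p) * w (snd q))"

text \<open>Bimodule actions: a.(u (x) u') = (a u) (x) u', (u (x) u').b = u (x) (u' b);
  i.e. left multiplication on the first factor (columns), right on the second (rows).\<close>
definition lactTT :: "tri \<Rightarrow> tens \<Rightarrow> tens" where
  "lactTT a F = (\<lambda>(p, q). multT a (\<lambda>p'. F (p', q)) p)"

definition ractTT :: "tens \<Rightarrow> tri \<Rightarrow> tens" where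
  "ractTT F b = (\<lambda>(p, q). multT (\<lambda>q'. F (p, q')) b q)"

text \<open>The product map pi(u (x) u') = u u', i.e. pi(F) = sum F(p,q) delta_p delta_q.\<close>
definition piT :: "tens \<Rightarrow> tri" where
  "piT F = (\<lambda>r. \<Sum>\<^sub>\<infinity>(p, q). F (p, q) * multT (deltaT p) (deltaT q) r)"

definition bimod_morph :: "(nat \<Rightarrow> real) \<Rightarrow> (tri \<Rightarrow> tens) \<Rightarrow> bool" where
  "bimod_morph w \<rho> \<longleftrightarrow>
     (\<forall>u. inT w u \<longrightarrow> inTT w (\<rho> u)) \<and>
     (\<forall>u v. inT w u \<longrightarrow> inT w v \<longrightarrow> \<rho> (\<lambda>p. u p + v p) = (\<lambda>z. \<rho> u z + \<rho> v z)) \<and>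
     (\<forall>c u. inT w u \<longrightarrow> \<rho> (\<lambda>p. c * u p) = (\<lambda>z. c * \<rho> u z)) \<and>
     (\<exists>C. \<forall>u. inT w u \<longrightarrow> normTT w (\<rho> u) \<le> C * normT w u) \<and>
     (\<forall>a u. inT w a \<longrightarrow> inT w u \<longrightarrow> \<rho> (multT a u) = lactTT a (\<rho> u)) \<and>
     (\<forall>a u. inT w a \<longrightarrow> inT w u \<longrightarrow> \<rho> (multT u a) = ractTT (\<rho> u) a)"

text \<open>A net (rho_i) of such morphisms, indexed along a proper filter F, with
  pi(rho_i(b)) -> b in T for all b.\<close>
definition approx_biproj_net :: "(nat \<Rightarrow> real) \<Rightarrow> 'i filter \<Rightarrow> ('i \<Rightarrow> tri \<Rightarrow> tens) \<Rightarrow> bool" where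
  "approx_biproj_net w F \<rho> \<longleftrightarrow> F \<noteq> bot \<and> (\<forall>i. bimod_morph w (\<rho> i)) \<and>
     (\<forall>b. inT w b \<longrightarrow> ((\<lambda>i. normT w (\<lambda>r. piT (\<rho> i b) r - b r)) \<longlongrightarrow> 0) F)"

end

theory Submission
  imports Defs
begin

text \<open>The off-diagonal unit x = \<delta>(P12, 0) satisfies x = e1 x = x e2 for the diagonal units
  e1 = \<delta>(P11, 0), e2 = \<delta>(P22, 0). For a bimodule morphism \<rho> this gives
  \<rho>(x) = x \<cdot> \<rho>(e2) = \<rho>(e1) \<cdot> x, so both tensor factors of \<rho>(x) live in the corner P12 of T.
  Since that corner squares to zero, \<pi>(\<rho>(x)) = 0 for every morphism \<rho>, which is at
  distance \<parallel>x\<parallel> = w 0 > 0 from x.\<close>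

lemma infsum_single_support:
  fixes f :: "'a \<Rightarrow> 'b::{comm_monoid_add, t2_space}"
  assumes "a \<in> A" and "\<And>x. x \<in> A \<Longrightarrow> x \<noteq> a \<Longrightarrow> f x = 0"
  shows "infsum f A = f a"
proof -
  have "infsum f A = infsum f {a}"
    by (rule infsum_cong_neutral) (use assms in auto)
  then show ?thesis by simp
qed

lemma summable_on_single_support:
  fixes f :: "'a \<Rightarrow> 'b::{comm_monoid_add, topological_space}"
  assumes "\<And>x. x \<noteq> a \<Longrightarrow> f x = 0"
  shows "f summable_on UNIV"
proof -
  have "f summable_on {a}" by simp
  then show ?thesis
    by (rule summable_on_cong_neutral[THEN iffD1, rotated -1]) (use assms in auto)
qed

definition delta :: "nat \<Rightarrow> nat \<Rightarrow> complex" where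
  "delta s = (\<lambda>n. if n = s then 1 else 0)"

lemma conv_zero_left [simp]: "conv (\<lambda>_. 0) g n = 0"
  unfolding conv_def by (rule infsum_0) auto

lemma conv_zero_right [simp]: "conv f (\<lambda>_. 0) n = 0"
  unfolding conv_def by (rule infsum_0) auto

lemma conv_delta: "conv (delta s) (delta t) = delta (min s t)"
proof
  fix n
  show "conv (delta s) (delta t) n = delta (min s t) n"
  proof (cases "min s t = n")
    case True
    have "conv (delta s) (delta t) n = (\<lambda>(a, b). delta s a * delta t b) (s, t)"
      unfolding conv_def
      by (rule infsum_single_support) (use True in \<open>auto simp: delta_def split: if_splits\<close>)
    then show ?thesis using True by (simp add: delta_def)
  next
    case False
    then show ?thesis
      unfolding conv_def by (auto simp: delta_def intro!: infsum_0)
  qed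
qed

lemma entry_deltaT: "entry (deltaT (i, s)) j = (if j = i then delta s else (\<lambda>_. 0))"
  by (auto simp: entry_def deltaT_def delta_def)

lemma inT_deltaT: "inT w (deltaT p)"
  unfolding inT_def l1_def entry_def deltaT_def
  by (intro conjI summable_on_single_support[where a = "snd p"]) auto

lemma multT_deltaT_P11_P12: "multT (deltaT (P11, s)) (deltaT (P12, t)) = deltaT (P12, min s t)"
  by (auto simp: fun_eq_iff multT_def entry_deltaT conv_delta split: pos.splits)
     (auto simp: deltaT_def delta_def)

lemma multT_deltaT_P12_P22: "multT (deltaT (P12, s)) (deltaT (P22, t)) = deltaT (P12, min s t)"
  by (auto simp: fun_eq_iff multT_def entry_deltaT conv_delta split: pos.splits)
     (auto simp: deltaT_def delta_def)

lemma multT_deltaT_P12_left: "fst p \<noteq> P12 \<Longrightarrow> multT (deltaT (P12, s)) v p = 0"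
  by (cases p) (auto simp: multT_def entry_deltaT split: pos.splits)

lemma multT_deltaT_P12_right: "fst p \<noteq> P12 \<Longrightarrow> multT v (deltaT (P12, s)) p = 0"
  by (cases p) (auto simp: multT_def entry_deltaT split: pos.splits)

lemma multT_deltaT_P12_P12:
  "fst p = P12 \<Longrightarrow> fst q = P12 \<Longrightarrow> multT (deltaT p) (deltaT q) r = 0"
  by (cases p; cases q; cases r) (auto simp: multT_def entry_deltaT split: pos.splits)

lemma bimod_morph_deltaT_P12_support:
  assumes "bimod_morph w \<rho>" and "fst p \<noteq> P12 \<or> fst q \<noteq> P12"
  shows "\<rho> (deltaT (P12, s)) (p, q) = 0"
proof -
  let ?x = "deltaT (P12, s)"
  have "\<rho> ?x = \<rho> (multT ?x (deltaT (P22, s)))"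
    by (simp add: multT_deltaT_P12_P22)
  also have "\<dots> = lactTT ?x (\<rho> (deltaT (P22, s)))"
    using assms(1) inT_deltaT unfolding bimod_morph_def by blast
  finally have left: "\<rho> ?x = lactTT ?x (\<rho> (deltaT (P22, s)))" .
  have "\<rho> ?x = \<rho> (multT (deltaT (P11, s)) ?x)"
    by (simp add: multT_deltaT_P11_P12)
  also have "\<dots> = ractTT (\<rho> (deltaT (P11, s))) ?x"
    using assms(1) inT_deltaT unfolding bimod_morph_def by blast
  finally have right: "\<rho> ?x = ractTT (\<rho> (deltaT (P11, s))) ?x" .
  show ?thesis
  proof (cases "fst p = P12")
    case False
    then show ?thesis
      by (subst left) (simp add: lactTT_def multT_deltaT_P12_left)
  next
    case True
    with assms(2) show ?thesis
      by (subst right) (simp add: ractTT_def multT_deltaT_P12_right)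
  qed
qed

lemma piT_corner_supported:
  assumes "\<And>p q. fst p \<noteq> P12 \<or> fst q \<noteq> P12 \<Longrightarrow> G (p, q) = 0"
  shows "piT G = (\<lambda>_. 0)"
  unfolding piT_def
  by (rule ext, rule infsum_0) (use assms multT_deltaT_P12_P12 in fastforce)

lemma normT_deltaT_uminus: "normT w (\<lambda>r. - deltaT p r) = w (snd p)"
proof -
  obtain i s where p: "p = (i, s)" by fastforce
  have "l1norm w (entry (\<lambda>r. - deltaT p r) j) = (if j = i then w s else 0)" for j
    unfolding l1norm_def p
    by (subst infsum_single_support[where a = s]) (auto simp: entry_def deltaT_def)
  then show ?thesis
    by (cases i) (simp_all add: normT_def p)
qed

theorem mainTheorem8:
  fixes w :: "nat \<Rightarrow> real" and F :: "'i filter" and \<rho> :: "'i \<Rightarrow> tri \<Rightarrow> tens"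
  assumes "weight w"
  shows "\<not> approx_biproj_net w F \<rho>"
proof
  assume net: "approx_biproj_net w F \<rho>"
  let ?x = "deltaT (P12, 0)"
  have "piT (\<rho> i ?x) = (\<lambda>_. 0)" for i
    using net bimod_morph_deltaT_P12_support piT_corner_supported
    unfolding approx_biproj_net_def by metis
  then have "normT w (\<lambda>r. piT (\<rho> i ?x) r - ?x r) = w 0" for i
    using normT_deltaT_uminus[of w "(P12, 0)"] by simp
  moreover have "((\<lambda>i. normT w (\<lambda>r. piT (\<rho> i ?x) r - ?x r)) \<longlongrightarrow> 0) F"
    using net inT_deltaT unfolding approx_biproj_net_def by blast
  ultimately have "((\<lambda>i. w 0) \<longlongrightarrow> 0) F" by simp
  moreover have "F \<noteq> bot" using net by (simp add: approx_biproj_net_def)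
  ultimately have "w 0 = 0" by (simp add: tendsto_const_iff)
  with assms show False unfolding weight_def by (metis less_irrefl)
qed

end
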